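(* Let $A$ (in $\mathcal H$) and $B$ (in $\mathcal K$) be closed densely defined operators with $A\dashv B$ via a bounded intertwining operator $T$. Assume that $T^{-1}$ is everywhere defined and bounded and that $TD(A)$ is a core for $B$. Then $\sigma_p(A)\subseteq\sigma_p(B)\subseteq\sigma(B)\subseteq\sigma(A)$.
   Context: A bounded operator $T:\mathcal H\to\mathcal K$ is a bounded intertwining operator for $A$ and $B$ if $T D(A)\subseteq D(B)$ and $BT\xi=TA\xi$ for all $\xi\in D(A)$. $A\dashv B$ (quasi-similarity) means there is a bounded intertwining operator $T$ for $A$ and $B$ that is injective with densely defined inverse $T^{-1}$. $\sigma(A)$ is the spectrum (complement of the set of $\lambda$ for which $(A-\lambda I)^{-1}$ exists as a bounded everywhere defined operator) and $\sigma_p(A)$ the set of eigenvalues. *)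

theory Defs
  imports "HOL-Analysis.Analysis"
begin

text \<open>HOL-Analysis only provides real inner product spaces, so complex vector
spaces / complex Hilbert spaces are introduced here as type classes
(in the style of the AFP entry Complex_Bounded_Operators).\<close>

class complex_vector = real_vector +
  fixes scaleC :: "complex \<Rightarrow> 'a \<Rightarrow> 'a" (infixr \<open>*\<^sub>C\<close> 75)
  assumes scaleC_add_right: "a *\<^sub>C (x + y) = a *\<^sub>C x + a *\<^sub>C y"
    and scaleC_add_left: "(a + b) *\<^sub>C x = a *\<^sub>C x + b *\<^sub>C x"
    and scaleC_scaleC: "a *\<^sub>C (b *\<^sub>C x) = (a * b) *\<^sub>C x"
    and scaleC_one: "1 *\<^sub>C x = x"
    and scaleR_scaleC: "scaleR r = scaleC (complex_of_real r)"

class complex_normed_vector = complex_vector + real_normed_vector +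
  assumes norm_scaleC: "norm (a *\<^sub>C x) = cmod a * norm x"

class complex_inner = complex_normed_vector +
  fixes cinner :: "'a \<Rightarrow> 'a \<Rightarrow> complex"
  assumes cinner_commute: "cinner x y = cnj (cinner y x)"
    and cinner_add_left: "cinner (x + y) z = cinner x z + cinner y z"
    and cinner_scaleC_left: "cinner (a *\<^sub>C x) y = cnj a * cinner x y"
    and cinner_ge_zero: "0 \<le> Re (cinner x x) \<and> Im (cinner x x) = 0"
    and cinner_eq_zero_iff: "cinner x x = 0 \<longleftrightarrow> x = 0"
    and norm_eq_sqrt_cinner: "norm x = sqrt (Re (cinner x x))"

class chilbert_space = complex_inner + complete_space

text \<open>A (possibly unbounded) operator from H to K is represented by its domain
D :: 'a set together with a function A :: 'a \<Rightarrow> 'b (values outside D are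
irrelevant).\<close>

definition csubspace :: "'a::complex_vector set \<Rightarrow> bool" where
  "csubspace D \<longleftrightarrow> 0 \<in> D \<and> (\<forall>x\<in>D. \<forall>y\<in>D. x + y \<in> D) \<and> (\<forall>c. \<forall>x\<in>D. c *\<^sub>C x \<in> D)"

definition lin_op :: "'a::complex_vector set \<Rightarrow> ('a \<Rightarrow> 'b::complex_vector) \<Rightarrow> bool" where
  "lin_op D A \<longleftrightarrow> csubspace D \<and> (\<forall>x\<in>D. \<forall>y\<in>D. A (x + y) = A x + A y)
      \<and> (\<forall>c. \<forall>x\<in>D. A (c *\<^sub>C x) = c *\<^sub>C A x)"

definition graph :: "'a set \<Rightarrow> ('a \<Rightarrow> 'b) \<Rightarrow> ('a \<times> 'b) set" where
  "graph D A = {(x, A x) | x. x \<in> D}"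

definition closed_op :: "'a::complex_normed_vector set \<Rightarrow> ('a \<Rightarrow> 'b::complex_normed_vector) \<Rightarrow> bool" where
  "closed_op D A \<longleftrightarrow> lin_op D A \<and> closed (graph D A)"

definition densely_defined :: "'a::complex_normed_vector set \<Rightarrow> bool" where
  "densely_defined D \<longleftrightarrow> closure D = UNIV"

definition cblinear :: "('a::complex_normed_vector \<Rightarrow> 'b::complex_normed_vector) \<Rightarrow> bool" where
  "cblinear T \<longleftrightarrow> bounded_linear T \<and> (\<forall>c x. T (c *\<^sub>C x) = c *\<^sub>C T x)"

definition intertwining :: "('a::complex_normed_vector \<Rightarrow> 'b::complex_normed_vector)
    \<Rightarrow> 'a set \<Rightarrow> ('a \<Rightarrow> 'a) \<Rightarrow> 'b set \<Rightarrow> ('b \<Rightarrow> 'b) \<Rightarrow> bool" where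
  "intertwining T DA A DB B \<longleftrightarrow> cblinear T \<and> T ` DA \<subseteq> DB \<and> (\<forall>\<xi>\<in>DA. B (T \<xi>) = T (A \<xi>))"

text \<open>Quasi-similarity A \<dashv> B via T: T is a bounded intertwining operator,
injective, with densely defined inverse (i.e. dense range).\<close>
definition quasi_sim_via :: "('a::complex_normed_vector \<Rightarrow> 'b::complex_normed_vector)
    \<Rightarrow> 'a set \<Rightarrow> ('a \<Rightarrow> 'a) \<Rightarrow> 'b set \<Rightarrow> ('b \<Rightarrow> 'b) \<Rightarrow> bool" where
  "quasi_sim_via T DA A DB B \<longleftrightarrow> intertwining T DA A DB B \<and> inj T \<and> closure (range T) = UNIV"

definition is_core :: "'a::complex_normed_vector set \<Rightarrow> 'a set \<Rightarrow> ('a \<Rightarrow> 'b::complex_normed_vector) \<Rightarrow> bool" where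
  "is_core C D B \<longleftrightarrow> csubspace C \<and> C \<subseteq> D \<and> closure (graph C B) = graph D B"

definition op_spectrum :: "'a::complex_normed_vector set \<Rightarrow> ('a \<Rightarrow> 'a) \<Rightarrow> complex set" where
  "op_spectrum D A = {z. \<not> (\<exists>R. cblinear R
       \<and> (\<forall>y. R y \<in> D \<and> A (R y) - z *\<^sub>C R y = y)
       \<and> (\<forall>x\<in>D. R (A x - z *\<^sub>C x) = x))}"

definition point_spectrum :: "'a::complex_normed_vector set \<Rightarrow> ('a \<Rightarrow> 'a) \<Rightarrow> complex set" where
  "point_spectrum D A = {z. \<exists>\<xi>\<in>D. \<xi> \<noteq> 0 \<and> A \<xi> = z *\<^sub>C \<xi>}"

end

theory Submission
  imports Defs
begin

(* The three inclusions are proved separately and in greater generality: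
   - an injective bounded intertwiner maps eigenvectors of A to eigenvectors of B;
   - every eigenvalue lies in the spectrum, because B - z I is not injective;
   - if R is the bounded resolvent of A at z, then S = T R T^{-1} is the
     resolvent of B at z.  S is a right inverse of B - z I by the intertwining
     relation.  That S is also a left inverse holds directly on the core T D(A);
     the identity S ((B - z I) x) = x defines a closed subset of H x H (S is
     continuous), so it passes from the graph of B on the core to its closure,
     which is the whole graph of B. *)

lemma bounded_linear_scaleC: "bounded_linear (\<lambda>x::'a::complex_normed_vector. z *\<^sub>C x)"
proof (rule bounded_linear_intro[where K="cmod z"])
  show "z *\<^sub>C (x + y) = z *\<^sub>C x + z *\<^sub>C y" for x y :: 'a by (rule scaleC_add_right)
  show "z *\<^sub>C (r *\<^sub>R x) = r *\<^sub>R (z *\<^sub>C x)" for r and x :: 'a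
    by (simp add: scaleR_scaleC scaleC_scaleC mult.commute)
  show "norm (z *\<^sub>C x) \<le> norm x * cmod z" for x :: 'a by (simp add: norm_scaleC mult.commute)
qed

lemma cblinear_compose:
  assumes "cblinear f" and "cblinear g"
  shows "cblinear (\<lambda>x. f (g x))"
  using assms bounded_linear_compose[of f g] unfolding cblinear_def by auto

lemma cblinear_zero: "cblinear f \<Longrightarrow> f 0 = 0"
  unfolding cblinear_def using linear_0 bounded_linear.linear by blast

definition is_resolvent :: "'a::complex_normed_vector set \<Rightarrow> ('a \<Rightarrow> 'a) \<Rightarrow> complex \<Rightarrow> ('a \<Rightarrow> 'a) \<Rightarrow> bool"
  where "is_resolvent D A z R \<longleftrightarrow> cblinear R
       \<and> (\<forall>y. R y \<in> D \<and> A (R y) - z *\<^sub>C R y = y)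
       \<and> (\<forall>x\<in>D. R (A x - z *\<^sub>C x) = x)"

lemma op_spectrum_iff: "z \<in> op_spectrum D A \<longleftrightarrow> (\<nexists>R. is_resolvent D A z R)"
  unfolding op_spectrum_def is_resolvent_def by simp

lemma point_spectrum_intertwining:
  assumes "intertwining T DA A DB B" and "inj T"
  shows "point_spectrum DA A \<subseteq> point_spectrum DB B"
proof
  fix z assume "z \<in> point_spectrum DA A"
  then obtain \<xi> where \<xi>: "\<xi> \<in> DA" "\<xi> \<noteq> 0" "A \<xi> = z *\<^sub>C \<xi>"
    unfolding point_spectrum_def by auto
  have T: "cblinear T" "T ` DA \<subseteq> DB" "B (T \<xi>) = T (A \<xi>)"
    using assms(1) \<xi>(1) unfolding intertwining_def by auto
  have "T \<xi> \<noteq> 0" using \<xi>(2) assms(2) cblinear_zero[OF T(1)] by (metis injD)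
  moreover have "B (T \<xi>) = z *\<^sub>C T \<xi>" using T \<xi>(3) unfolding cblinear_def by simp
  ultimately show "z \<in> point_spectrum DB B"
    unfolding point_spectrum_def using T(2) \<xi>(1) by blast
qed

text \<open>Eigenvalues belong to the spectrum: a linear left inverse of \<open>B - z I\<close>
  would have to map \<open>0\<close> both to \<open>0\<close> and to a nonzero eigenvector.\<close>
lemma point_spectrum_subset_op_spectrum: "point_spectrum D B \<subseteq> op_spectrum D B"
proof
  fix z assume "z \<in> point_spectrum D B"
  then obtain \<xi> where \<xi>: "\<xi> \<in> D" "\<xi> \<noteq> 0" "B \<xi> = z *\<^sub>C \<xi>"
    unfolding point_spectrum_def by auto
  show "z \<in> op_spectrum D B" unfolding op_spectrum_iff
  proof
    assume "\<exists>R. is_resolvent D B z R"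
    then obtain R where "cblinear R" "\<forall>x\<in>D. R (B x - z *\<^sub>C x) = x"
      unfolding is_resolvent_def by blast
    then have "R 0 = \<xi>" and "R 0 = 0" using \<xi> cblinear_zero by auto
    then show False using \<xi>(2) by simp
  qed
qed

text \<open>A continuous left inverse of \<open>B - z I\<close> on a core is a left inverse on the
  whole domain: the identity describes a closed set containing the graph on the core.\<close>
lemma left_inverse_extends_from_core:
  fixes S :: "'b::complex_normed_vector \<Rightarrow> 'b"
  assumes "continuous_on UNIV S" and "closure (graph C B) = graph D B"
    and "\<And>x. x \<in> C \<Longrightarrow> S (B x - z *\<^sub>C x) = x"
    and "x \<in> D"
  shows "S (B x - z *\<^sub>C x) = x"
proof -
  define P where "P = {p. S (snd p - z *\<^sub>C fst p) = fst p}"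
  have "continuous_on UNIV (\<lambda>p::'b \<times> 'b. S (snd p - z *\<^sub>C fst p))"
    by (intro continuous_on_compose2[OF assms(1)] continuous_intros
        bounded_linear.continuous_on[OF bounded_linear_scaleC]) auto
  then have "closed P" unfolding P_def
    by (intro closed_Collect_eq continuous_on_fst continuous_on_id) auto
  moreover have "graph C B \<subseteq> P" using assms(3) unfolding graph_def P_def by auto
  ultimately have "graph D B \<subseteq> P" using assms(2) closure_minimal by metis
  then show ?thesis using assms(4) unfolding graph_def P_def by auto
qed

lemma resolvent_transport:
  assumes T: "intertwining T DA A DB B" and bij: "bij T" and Tinv: "cblinear (inv T)"
    and core: "closure (graph (T ` DA) B) = graph DB B"
    and R: "is_resolvent DA A z R"
  shows "is_resolvent DB B z (\<lambda>y. T (R (inv T y)))"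
proof -
  define S where "S = (\<lambda>y. T (R (inv T y)))"
  have Tc: "cblinear T" and TD: "T ` DA \<subseteq> DB"
    and TB: "\<And>\<xi>. \<xi> \<in> DA \<Longrightarrow> B (T \<xi>) = T (A \<xi>)"
    using T unfolding intertwining_def by auto
  have Tdiff: "T (x - z *\<^sub>C y) = T x - z *\<^sub>C T y" for x y
    using Tc unfolding cblinear_def by (simp add: linear_diff bounded_linear.linear)
  have TI: "T (inv T y) = y" and IT: "inv T (T x) = x" for x y
    using bij by (simp_all add: bij_is_surj surj_f_inv_f bij_is_inj inv_f_f)
  have Rc: "cblinear R" and R1: "\<And>y. R y \<in> DA \<and> A (R y) - z *\<^sub>C R y = y"
    and R2: "\<And>x. x \<in> DA \<Longrightarrow> R (A x - z *\<^sub>C x) = x"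
    using R unfolding is_resolvent_def by auto
  have Sc: "cblinear S" unfolding S_def
    by (intro cblinear_compose[OF Tc] cblinear_compose[OF Rc Tinv])
  have right_inverse: "S y \<in> DB \<and> B (S y) - z *\<^sub>C S y = y" for y
  proof -
    have x: "R (inv T y) \<in> DA" using R1 by blast
    have "B (S y) - z *\<^sub>C S y = T (A (R (inv T y)) - z *\<^sub>C R (inv T y))"
      unfolding S_def using TB[OF x] by (simp add: Tdiff)
    also have "\<dots> = y" using R1 TI by simp
    finally show ?thesis using x TD unfolding S_def by auto
  qed
  have on_core: "S (B x - z *\<^sub>C x) = x" if "x \<in> T ` DA" for x
  proof -
    from that obtain \<xi> where \<xi>: "\<xi> \<in> DA" "x = T \<xi>" by blast
    have "S (B x - z *\<^sub>C x) = T (R (A \<xi> - z *\<^sub>C \<xi>))"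
      unfolding S_def \<xi>(2) TB[OF \<xi>(1)] Tdiff[symmetric] IT ..
    also have "\<dots> = x" using R2[OF \<xi>(1)] \<xi>(2) by simp
    finally show ?thesis .
  qed
  have "continuous_on UNIV S"
    using Sc unfolding cblinear_def by (simp add: linear_continuous_on)
  then have "\<forall>x\<in>DB. S (B x - z *\<^sub>C x) = x"
    using left_inverse_extends_from_core[OF _ core on_core] by blast
  then show ?thesis using Sc right_inverse unfolding is_resolvent_def S_def by blast
qed

theorem proposition3p14:
  fixes T :: "'a::chilbert_space \<Rightarrow> 'b::chilbert_space"
    and DA :: "'a set" and A :: "'a \<Rightarrow> 'a"
    and DB :: "'b set" and B :: "'b \<Rightarrow> 'b"
  assumes "closed_op DA A" and "densely_defined DA"
    and "closed_op DB B" and "densely_defined DB"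
    and "quasi_sim_via T DA A DB B"
    and "surj T" and "cblinear (inv T)"
    and "is_core (T ` DA) DB B"
  shows "point_spectrum DA A \<subseteq> point_spectrum DB B
    \<and> point_spectrum DB B \<subseteq> op_spectrum DB B
    \<and> op_spectrum DB B \<subseteq> op_spectrum DA A"
proof -
  have T: "intertwining T DA A DB B" and inj: "inj T"
    using assms(5) unfolding quasi_sim_via_def by auto
  have bij: "bij T" using inj assms(6) by (simp add: bij_def)
  have core: "closure (graph (T ` DA) B) = graph DB B"
    using assms(8) unfolding is_core_def by simp
  have "op_spectrum DB B \<subseteq> op_spectrum DA A"
  proof
    fix z assume "z \<in> op_spectrum DB B"
    then show "z \<in> op_spectrum DA A"
      using resolvent_transport[OF T bij assms(7) core] unfolding op_spectrum_iff by blast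
  qed
  then show ?thesis
    using point_spectrum_intertwining[OF T inj] point_spectrum_subset_op_spectrum by blast
qed

end
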